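(* Let $\alpha\geq 2$, $\beta\geq 1$ and $n\geq 0$ be integers. (i) If either $\alpha$ is odd and $\beta$ is even, or both $\alpha$ and $\beta$ are even, then $$\overline{B}_{2^\alpha,3^\beta}(12n+3)\equiv 0\pmod 8\quad\text{and}\quad \overline{B}_{2^\alpha,3^\beta}(12n+7)\equiv 0\pmod 8.$$ (ii) If either $\alpha$ and $\beta$ have different parity, or both $\alpha$ and $\beta$ are even, then $$\overline{B}_{2^\alpha,3^\beta}(12n+11)\equiv 0\pmod 8.$$
   Context: An overpartition of a nonnegative integer $n$ is a partition of $n$ (a non-increasing sequence of positive integers summing to $n$) in which the first occurrence of each distinct part may be overlined. For relatively prime integers $\ell_1,\ell_2>1$, an $(\ell_1,\ell_2)$-biregular overpartition of $n$ is an overpartition of $n$ none of whose parts is divisible by $\ell_1$ or by $\ell_2$, and $\overline{B}_{\ell_1,\ell_2}(n)$ denotes the number of such overpartitions ($\overline{B}_{\ell_1,\ell_2}(0)=1$). Equivalently, writing $f_k=(q^k;q^k)_\infty=\prod_{m\ge1}(1-q^{km})$ for $|q|<1$, $$\sum_{n\ge0}\overline{B}_{\ell_1,\ell_2}(n)q^n=\frac{f_2\, f_{\ell_1}^2\, f_{\ell_2}^2\, f_{2\ell_1\ell_2}}{f_1^2\, f_{2\ell_1}\, f_{2\ell_2}\, f_{\ell_1\ell_2}^2}.$$ *)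

theory Defs
  imports Main "HOL-Library.Multiset"
begin

text \<open>An overpartition of n is represented as a pair (P, S): P is the multiset of
  parts of a partition of n (all parts positive, summing to n), and S is the set of
  distinct part sizes whose first occurrence is overlined (so S \<subseteq> set_mset P).\<close>

definition overpartitions :: "nat \<Rightarrow> (nat multiset \<times> nat set) set" where
  "overpartitions n = {(P, S). (\<forall>p \<in># P. 0 < p) \<and> sum_mset P = n \<and> S \<subseteq> set_mset P}"

definition biregular_overpartitions :: "nat \<Rightarrow> nat \<Rightarrow> nat \<Rightarrow> (nat multiset \<times> nat set) set" where
  "biregular_overpartitions l1 l2 n =
     {(P, S) \<in> overpartitions n. \<forall>p \<in># P. \<not> l1 dvd p \<and> \<not> l2 dvd p}"

definition Bbar :: "nat \<Rightarrow> nat \<Rightarrow> nat \<Rightarrow> nat" where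
  "Bbar l1 l2 n = card (biregular_overpartitions l1 l2 n)"

end

(*
  Grouping overpartitions by their underlying partition P, each P with d distinct part sizes
  carries 2^d overlinings.  Modulo 8 only partitions with one or two part sizes survive:
  Bbar(n) = 2 D(n) + 4 T(n) (mod 8), where D(n) counts the admissible divisors of n and T(n)
  the partitions with exactly two part sizes.  Counting representations n = i a + j b with
  admissible a, b and i, j > 0 in two ways gives 2 T(n) + sum_{a in D(n)} (n/a - 1)
  = sum_{0<u<n} D(u) D(n-u), hence

    Bbar(n) = 2 sum_{a in D(n)} (2 - n/a) + 2 sum_{0<u<n} D(u) D(n-u)   (mod 8).

  For l1 = 2^alpha, l2 = 3^beta and n = 3 (mod 4) both sums are divisible by 4.  The first one
  is congruent to sum_{a in D(n)} chi(n/a) with chi the non-principal character modulo 4, and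
  that sum vanishes.  The convolution is symmetric under u <-> n - u and each of its terms is
  even.  Both facts rest on D(p^b m) = min(b + 1, k) * #{e dvd m. e avoids the other modulus}
  when p^k is one of l1, l2 and p does not divide m, and on non-squares having an even number
  of divisors; the parity hypotheses on alpha and beta make one of these two factors even.
*)

theory Submission
  imports Defs "HOL-Computational_Algebra.Primes" "HOL-Library.Disjoint_Sets" "HOL-Library.Z2"
begin

section \<open>Biregular overpartitions modulo 8\<close>

lemma sum_pow2_mod_8:
  fixes c :: "'a \<Rightarrow> nat"
  assumes "finite A" and "\<And>x. x \<in> A \<Longrightarrow> c x \<ge> 1"
  shows "(\<Sum>x\<in>A. (2::nat) ^ c x) mod 8 = (2 * card {x\<in>A. c x = 1} + 4 * card {x\<in>A. c x = 2}) mod 8"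
proof -
  have pow: "(2::nat) ^ k mod 8 = 2 * of_bool (k = 1) + 4 * of_bool (k = 2)" if k: "k \<ge> 1" for k
  proof -
    consider "k = 1" | "k = 2" | "k \<ge> 3" using k by linarith
    then show ?thesis
    proof cases
      case 3
      then have "(2::nat) ^ k = 2 ^ 3 * 2 ^ (k - 3)" by (metis le_add_diff_inverse power_add)
      with 3 show ?thesis by simp
    qed simp_all
  qed
  have "(\<Sum>x\<in>A. (2::nat) ^ c x) mod 8 = (\<Sum>x\<in>A. 2 ^ c x mod 8) mod 8"
    by (simp add: mod_sum_eq)
  also have "(\<Sum>x\<in>A. 2 ^ c x mod 8) = (\<Sum>x\<in>A. 2 * of_bool (c x = 1) + 4 * of_bool (c x = 2) :: nat)"
    using assms(2) by (intro sum.cong) (simp_all add: pow)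
  also have "\<dots> = 2 * card {x\<in>A. c x = 1} + 4 * card {x\<in>A. c x = 2}"
    using assms(1) by (simp add: sum.distrib Int_def flip: sum_distrib_left)
  finally show ?thesis .
qed

definition biregular_partitions :: "nat \<Rightarrow> nat \<Rightarrow> nat \<Rightarrow> nat multiset set" where
  "biregular_partitions l1 l2 n = {P. (\<forall>p\<in>#P. \<not> l1 dvd p \<and> \<not> l2 dvd p) \<and> sum_mset P = n}"

lemma biregular_overpartitions_eq_Sigma:
  "biregular_overpartitions l1 l2 n = Sigma (biregular_partitions l1 l2 n) (\<lambda>P. Pow (set_mset P))"
  unfolding biregular_overpartitions_def overpartitions_def biregular_partitions_def
  by (auto intro!: gr0I)

lemma finite_biregular_partitions: "finite (biregular_partitions l1 l2 n)"
proof (rule finite_subset)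
  have "size P \<le> n \<and> set_mset P \<subseteq> {..n}" if "P \<in> biregular_partitions l1 l2 n" for P
  proof -
    from that have pos: "\<forall>p\<in>#P. 0 < p" and sum: "sum_mset P = n"
      by (auto simp: biregular_partitions_def intro!: gr0I)
    from pos have "size P \<le> sum_mset P"
      by (induction P) auto
    moreover have "p \<le> sum_mset P" if "p \<in># P" for p
      using that by (simp add: sum_mset.remove)
    ultimately show ?thesis
      using sum by auto
  qed
  then show "biregular_partitions l1 l2 n \<subseteq> (\<Union>k\<le>n. multisets_of_size {..n} k)"
    by (auto simp: multisets_of_size_def)
qed auto

lemma Bbar_eq_sum_pow2_card_parts:
  "Bbar l1 l2 n = (\<Sum>P\<in>biregular_partitions l1 l2 n. 2 ^ card (set_mset P))"
  unfolding Bbar_def biregular_overpartitions_eq_Sigma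
  using finite_biregular_partitions by (subst card_SigmaI) (auto simp: card_Pow)

lemma Bbar_mod_8:
  assumes "n > 0"
  shows "Bbar l1 l2 n mod 8 =
    (2 * card {P \<in> biregular_partitions l1 l2 n. card (set_mset P) = 1}
     + 4 * card {P \<in> biregular_partitions l1 l2 n. card (set_mset P) = 2}) mod 8"
  unfolding Bbar_eq_sum_pow2_card_parts
proof (rule sum_pow2_mod_8[OF finite_biregular_partitions])
  fix P assume "P \<in> biregular_partitions l1 l2 n"
  with assms have "P \<noteq> {#}"
    by (auto simp: biregular_partitions_def)
  then show "1 \<le> card (set_mset P)"
    by (simp add: Suc_le_eq card_gt_0_iff)
qed

definition biregular_divisors :: "nat \<Rightarrow> nat \<Rightarrow> nat \<Rightarrow> nat set" where
  "biregular_divisors l1 l2 u = {a. a dvd u \<and> \<not> l1 dvd a \<and> \<not> l2 dvd a}"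

lemma finite_biregular_divisors: "u > 0 \<Longrightarrow> finite (biregular_divisors l1 l2 u)"
  unfolding biregular_divisors_def by (rule finite_subset[OF _ finite_divisors_nat]) auto

lemma biregular_divisors_commute: "biregular_divisors l1 l2 u = biregular_divisors l2 l1 u"
  unfolding biregular_divisors_def by auto

lemma divisors_not_dvd_eq:
  assumes "\<not> r dvd (m::nat)"
  shows "{e. e dvd m \<and> \<not> r dvd e} = {e. e dvd m}"
proof -
  have "\<not> r dvd e" if "e dvd m" for e
    using that assms by (meson dvd_trans)
  then show ?thesis
    by auto
qed

lemma card_partitions_one_distinct_part:
  assumes "n > 0"
  shows "card {P \<in> biregular_partitions l1 l2 n. card (set_mset P) = 1} = card (biregular_divisors l1 l2 n)"
proof -
  let ?f = "\<lambda>a. replicate_mset (n div a) a"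
  have quotient_pos: "n div a > 0" if "a \<in> biregular_divisors l1 l2 n" for a
    using that assms by (auto simp: biregular_divisors_def dvd_div_eq_0_iff)
  have image: "?f ` biregular_divisors l1 l2 n = {P \<in> biregular_partitions l1 l2 n. card (set_mset P) = 1}"
  proof (intro equalityI subsetI)
    fix P assume P: "P \<in> {P \<in> biregular_partitions l1 l2 n. card (set_mset P) = 1}"
    then obtain a where a: "set_mset P = {a}"
      by (auto simp: card_Suc_eq)
    then have P_eq: "P = replicate_mset (size P) a"
      by (metis set_mset_subset_singletonD order_refl)
    from P have "sum_mset P = n"
      by (simp add: biregular_partitions_def)
    then have "size P * a = n"
      by (subst (asm) P_eq) simp
    with assms P a have "a \<in> biregular_divisors l1 l2 n" and "n div a = size P"
      by (auto simp: biregular_partitions_def biregular_divisors_def)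
    with P_eq show "P \<in> ?f ` biregular_divisors l1 l2 n"
      by (intro image_eqI[where x = a]) simp_all
  next
    fix P assume "P \<in> ?f ` biregular_divisors l1 l2 n"
    then obtain a where a: "a \<in> biregular_divisors l1 l2 n" and P_eq: "P = ?f a"
      by blast
    with quotient_pos[OF a] show "P \<in> {P \<in> biregular_partitions l1 l2 n. card (set_mset P) = 1}"
      by (auto simp: biregular_partitions_def biregular_divisors_def)
  qed
  have "inj_on ?f (biregular_divisors l1 l2 n)"
  proof (rule inj_on_inverseI[where g = "\<lambda>P. Max (set_mset P)"])
    fix a assume "a \<in> biregular_divisors l1 l2 n"
    then show "Max (set_mset (?f a)) = a"
      using quotient_pos[of a] by simp
  qed
  then have "card (?f ` biregular_divisors l1 l2 n) = card (biregular_divisors l1 l2 n)"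
    by (rule card_image)
  then show ?thesis
    unfolding image .
qed

text \<open>\<open>(a, i, b, j)\<close> stands for \<open>i\<close> parts equal to \<open>a\<close> and \<open>j\<close> parts equal to \<open>b\<close>;
  \<open>a = b\<close> is allowed.\<close>

definition biregular_block_pairs :: "nat \<Rightarrow> nat \<Rightarrow> nat \<Rightarrow> (nat \<times> nat \<times> nat \<times> nat) set" where
  "biregular_block_pairs l1 l2 n = {(a, i, b, j).
     \<not> l1 dvd a \<and> \<not> l2 dvd a \<and> \<not> l1 dvd b \<and> \<not> l2 dvd b \<and> 0 < i \<and> 0 < j \<and> i * a + j * b = n}"

lemma inj_on_two_blocks:
  "inj_on (\<lambda>(a, i, b, j). replicate_mset i a + replicate_mset j b)
     {(a, i, b, j). a < (b::'a::linorder) \<and> 0 < i \<and> 0 < j}"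
proof -
  let ?g = "\<lambda>P. (Min (set_mset P), count P (Min (set_mset P)), Max (set_mset P), count P (Max (set_mset P)))"
  have "?g (replicate_mset i a + replicate_mset j b) = (a, i, b, j)" if "a < b" "0 < i" "0 < j" for a b :: 'a and i j :: nat
    using that by simp
  then show ?thesis
    by (intro inj_on_inverseI[where g = ?g]) auto
qed

lemma card_partitions_two_distinct_parts:
  "card {P \<in> biregular_partitions l1 l2 n. card (set_mset P) = 2}
     = card {(a, i, b, j) \<in> biregular_block_pairs l1 l2 n. a < b}"
proof -
  let ?A = "{(a, i, b, j) \<in> biregular_block_pairs l1 l2 n. a < b}"
  let ?f = "\<lambda>(a, i, b, j). replicate_mset i a + replicate_mset j b"
  have image: "?f ` ?A = {P \<in> biregular_partitions l1 l2 n. card (set_mset P) = 2}"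
  proof (intro equalityI subsetI)
    fix P assume P: "P \<in> {P \<in> biregular_partitions l1 l2 n. card (set_mset P) = 2}"
    then have "card (set_mset P) = 2"
      by simp
    then obtain x y where xy: "set_mset P = {x, y}" "x \<noteq> y"
      by (meson card_2_iff)
    define a b where "a = min x y" and "b = max x y"
    from xy have ab: "set_mset P = {a, b}" "a < b"
      by (auto simp: a_def b_def min_def max_def)
    then have P_eq: "P = ?f (a, count P a, b, count P b)"
      by (intro multiset_eqI) (auto simp: count_eq_zero_iff)
    from P have "sum_mset P = n"
      by (simp add: biregular_partitions_def)
    then have "count P a * a + count P b * b = n"
      by (subst (asm) P_eq) simp
    with P ab have "(a, count P a, b, count P b) \<in> ?A"
      by (auto simp: biregular_partitions_def biregular_block_pairs_def)
    with P_eq show "P \<in> ?f ` ?A"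
      by (rule image_eqI)
  next
    fix P assume "P \<in> ?f ` ?A"
    then obtain a i b j where "(a, i, b, j) \<in> biregular_block_pairs l1 l2 n" "a < b"
      and P_eq: "P = replicate_mset i a + replicate_mset j b"
      by auto
    then show "P \<in> {P \<in> biregular_partitions l1 l2 n. card (set_mset P) = 2}"
      by (auto simp: biregular_partitions_def biregular_block_pairs_def)
  qed
  have "?A \<subseteq> {(a, i, b, j). a < b \<and> 0 < i \<and> 0 < j}"
    by (auto simp: biregular_block_pairs_def)
  then have "inj_on ?f ?A"
    by (rule inj_on_subset[OF inj_on_two_blocks])
  then have "card (?f ` ?A) = card ?A"
    by (rule card_image)
  then show ?thesis
    unfolding image .
qed

lemma biregular_block_pairs_eq_image:
  "biregular_block_pairs l1 l2 n = (\<lambda>(u, a, b). (a, u div a, b, (n - u) div b)) `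
     (SIGMA u:{1..<n}. biregular_divisors l1 l2 u \<times> biregular_divisors l1 l2 (n - u))"
  (is "_ = ?g ` ?S")
proof (intro equalityI subsetI)
  fix x assume "x \<in> biregular_block_pairs l1 l2 n"
  then obtain a i b j where x: "x = (a, i, b, j)"
    and adm: "\<not> l1 dvd a" "\<not> l2 dvd a" "\<not> l1 dvd b" "\<not> l2 dvd b"
    and ij: "0 < i" "0 < j" "i * a + j * b = n"
    by (auto simp: biregular_block_pairs_def)
  from adm have "0 < a" "0 < b"
    by (auto intro!: gr0I)
  from ij have rest: "n - i * a = j * b"
    by simp
  from ij \<open>0 < b\<close> have "0 < j * b"
    by simp
  with ij have "i * a < n"
    by linarith
  with adm ij rest \<open>0 < a\<close> have "(i * a, a, b) \<in> ?S"
    by (simp add: biregular_divisors_def)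
  moreover have "x = ?g (i * a, a, b)"
    using x \<open>0 < a\<close> \<open>0 < b\<close> rest by simp
  ultimately show "x \<in> ?g ` ?S"
    by (rule rev_image_eqI)
next
  fix x assume "x \<in> ?g ` ?S"
  then obtain u a b where "(u, a, b) \<in> ?S" and x: "x = ?g (u, a, b)"
    by blast
  then have u: "0 < u" "u < n"
    and a: "a \<in> biregular_divisors l1 l2 u" and b: "b \<in> biregular_divisors l1 l2 (n - u)"
    by auto
  from a b have "a dvd u" "b dvd n - u"
    by (simp_all add: biregular_divisors_def)
  with u have "0 < u div a" "0 < (n - u) div b" "u div a * a + (n - u) div b * b = n"
    by (auto simp: div_greater_zero_iff dest: dvd_imp_le intro!: gr0I)
  with a b x show "x \<in> biregular_block_pairs l1 l2 n"
    by (simp add: biregular_divisors_def biregular_block_pairs_def)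
qed

lemma finite_biregular_block_pairs: "finite (biregular_block_pairs l1 l2 n)"
  unfolding biregular_block_pairs_eq_image
  by (intro finite_imageI finite_SigmaI finite_cartesian_product finite_biregular_divisors) auto

lemma card_biregular_block_pairs_convolution:
  "card (biregular_block_pairs l1 l2 n) =
     (\<Sum>u\<in>{1..<n}. card (biregular_divisors l1 l2 u) * card (biregular_divisors l1 l2 (n - u)))"
proof -
  let ?g = "\<lambda>(u, a, b). (a, u div a, b, (n - u) div b)"
  let ?S = "SIGMA u:{1..<n}. biregular_divisors l1 l2 u \<times> biregular_divisors l1 l2 (n - u)"
  have "inj_on ?g ?S"
  proof (rule inj_on_inverseI[where g = "\<lambda>(a, i, b, j). (i * a, a, b)"])
    fix x assume "x \<in> ?S"
    then show "(\<lambda>(a, i, b, j). (i * a, a, b)) (?g x) = x"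
      by (auto simp: biregular_divisors_def)
  qed
  then have "card (biregular_block_pairs l1 l2 n) = card ?S"
    by (simp add: biregular_block_pairs_eq_image card_image)
  also have "\<dots> = (\<Sum>u\<in>{1..<n}. card (biregular_divisors l1 l2 u \<times> biregular_divisors l1 l2 (n - u)))"
    by (rule card_SigmaI) (auto intro!: finite_biregular_divisors)
  finally show ?thesis
    by (simp add: card_cartesian_product)
qed

lemma card_biregular_block_pairs_diagonal:
  assumes "n > 0"
  shows "card {(a, i, b, j) \<in> biregular_block_pairs l1 l2 n. a = b} = (\<Sum>a\<in>biregular_divisors l1 l2 n. n div a - 1)"
proof -
  let ?diag = "\<lambda>(a, i). (a, i, a, n div a - i)"
  let ?S = "SIGMA a:biregular_divisors l1 l2 n. {1..<n div a}"
  have image: "?diag ` ?S = {(a, i, b, j) \<in> biregular_block_pairs l1 l2 n. a = b}"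
  proof (intro equalityI subsetI)
    fix x assume "x \<in> ?diag ` ?S"
    then obtain a i where a: "a \<in> biregular_divisors l1 l2 n" and i: "1 \<le> i" "i < n div a"
      and x: "x = (a, i, a, n div a - i)"
      by auto
    from a have "a dvd n"
      by (simp add: biregular_divisors_def)
    from i have "i * a + (n div a - i) * a = (i + (n div a - i)) * a"
      by (simp only: add_mult_distrib)
    also from i \<open>a dvd n\<close> have "\<dots> = n"
      by simp
    finally have "i * a + (n div a - i) * a = n" .
    with a i x show "x \<in> {(a, i, b, j) \<in> biregular_block_pairs l1 l2 n. a = b}"
      by (simp add: biregular_divisors_def biregular_block_pairs_def)
  next
    fix x assume "x \<in> {(a, i, b, j) \<in> biregular_block_pairs l1 l2 n. a = b}"
    then obtain a i j where x: "x = (a, i, a, j)" and "(a, i, a, j) \<in> biregular_block_pairs l1 l2 n"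
      by auto
    then have adm: "\<not> l1 dvd a" "\<not> l2 dvd a" and ij: "0 < i" "0 < j" "(i + j) * a = n"
      by (simp_all add: biregular_block_pairs_def algebra_simps)
    with assms have "a dvd n" "n div a = i + j"
      by auto
    with adm ij have "(a, i) \<in> ?S" "x = ?diag (a, i)"
      using x by (auto simp: biregular_divisors_def)
    then show "x \<in> ?diag ` ?S"
      by (rule rev_image_eqI)
  qed
  have "inj_on ?diag ?S"
    by (rule inj_onI) auto
  then have "card (?diag ` ?S) = card ?S"
    by (rule card_image)
  also have "\<dots> = (\<Sum>a\<in>biregular_divisors l1 l2 n. card {1..<n div a})"
    using finite_biregular_divisors[OF assms] by (rule card_SigmaI) simp
  finally show ?thesis
    unfolding image by simp
qed

lemma card_biregular_block_pairs:
  assumes "n > 0"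
  shows "card (biregular_block_pairs l1 l2 n) =
    2 * card {(a, i, b, j) \<in> biregular_block_pairs l1 l2 n. a < b}
    + (\<Sum>a\<in>biregular_divisors l1 l2 n. n div a - 1)"
proof -
  let ?Q = "biregular_block_pairs l1 l2 n"
  let ?lt = "{(a, i, b, j) \<in> ?Q. a < b}"
  let ?gt = "{(a, i, b, j) \<in> ?Q. b < a}"
  let ?eq = "{(a, i, b, j) \<in> ?Q. a = b}"
  let ?swap = "\<lambda>(a, i, b, j). (b, j, a, i)"
  have fin: "finite ?lt" "finite ?gt" "finite ?eq"
    using finite_biregular_block_pairs[of l1 l2 n] by (auto intro: finite_subset)
  have split: "?lt \<union> ?gt \<union> ?eq = ?Q"
    by (auto simp: linorder_neq_iff)
  have "?lt \<inter> ?gt = {}" "(?lt \<union> ?gt) \<inter> ?eq = {}"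
    by auto
  with fin have "card (?lt \<union> ?gt \<union> ?eq) = card ?lt + card ?gt + card ?eq"
    by (simp add: card_Un_disjoint)
  then have "card ?Q = card ?lt + card ?gt + card ?eq"
    unfolding split .
  moreover have "inj_on ?swap ?lt"
    by (rule inj_onI) auto
  then have "card (?swap ` ?lt) = card ?lt"
    by (rule card_image)
  moreover have "?swap ` ?lt = ?gt"
    by (force simp: biregular_block_pairs_def add.commute)
  ultimately show ?thesis
    using card_biregular_block_pairs_diagonal[OF assms] by simp
qed

lemma eight_dvd_Bbar_if:
  assumes "n > 0"
    and "4 dvd (\<Sum>u\<in>{1..<n}. card (biregular_divisors l1 l2 u) * card (biregular_divisors l1 l2 (n - u)))"
    and "4 dvd (\<Sum>a\<in>biregular_divisors l1 l2 n. 2 - int (n div a))"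
  shows "8 dvd Bbar l1 l2 n"
proof -
  let ?D = "biregular_divisors l1 l2 n"
  define d where "d = card ?D"
  define t where "t = card {(a, i, b, j) \<in> biregular_block_pairs l1 l2 n. a < b}"
  define s where "s = (\<Sum>a\<in>?D. n div a - 1)"
  define c where "c = (\<Sum>u\<in>{1..<n}. card (biregular_divisors l1 l2 u) * card (biregular_divisors l1 l2 (n - u)))"
  have "n div a \<ge> 1" if "a \<in> ?D" for a
    using that \<open>n > 0\<close> by (auto simp: biregular_divisors_def dvd_div_eq_0_iff Suc_le_eq)
  then have "int s = (\<Sum>a\<in>?D. int (n div a) - 1)"
    unfolding s_def of_nat_sum by (intro sum.cong) (simp_all add: of_nat_diff)
  then have "int d - int s = (\<Sum>a\<in>?D. 2 - int (n div a))"
    by (simp add: d_def sum_subtractf)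
  moreover have "2 * t + s = c"
    using card_biregular_block_pairs[OF \<open>n > 0\<close>] card_biregular_block_pairs_convolution
    by (simp add: t_def s_def c_def)
  ultimately have "int (2 * d + 4 * t) = 2 * (\<Sum>a\<in>?D. 2 - int (n div a)) + 2 * int c"
    by (simp add: algebra_simps flip: of_nat_add)
  with assms(2,3) have "8 dvd 2 * d + 4 * t"
    unfolding c_def by presburger
  moreover have "Bbar l1 l2 n mod 8 = (2 * d + 4 * t) mod 8"
    using Bbar_mod_8[OF \<open>n > 0\<close>] card_partitions_one_distinct_part[OF \<open>n > 0\<close>]
      card_partitions_two_distinct_parts
    by (simp add: d_def t_def)
  ultimately show ?thesis
    by (simp add: mod_eq_0_iff_dvd)
qed

section \<open>Parity arguments\<close>

lemma even_sum_if_involution: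
  fixes f :: "'a \<Rightarrow> nat"
  assumes "\<And>x. x \<in> X \<Longrightarrow> h x \<in> X" "\<And>x. x \<in> X \<Longrightarrow> h (h x) = x"
    and "\<And>x. x \<in> X \<Longrightarrow> h x \<noteq> x" and "\<And>x. x \<in> X \<Longrightarrow> f (h x) = f x"
  shows "even (\<Sum>x\<in>X. f x)"
proof -
  \<comment> \<open>in the two-element field each orbit \<open>{x, h x}\<close> contributes \<open>f x + f x = 0\<close>\<close>
  have "(\<Sum>x\<in>X. of_nat (f x) :: bit) = 0"
    by (rule sum_involution_eq_0[where h = h]) (use assms in \<open>auto simp flip: mult_2\<close>)
  then show ?thesis
    by (metis even_of_nat even_zero of_nat_sum)
qed

lemma even_card_divisors_if_not_square:
  assumes "(m::nat) > 0" and "\<And>s. m \<noteq> s * s"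
  shows "even (card {e. e dvd m})"
proof -
  have "even (\<Sum>e\<in>{e. e dvd m}. 1::nat)"
  proof (rule even_sum_if_involution[where h = "\<lambda>e. m div e"])
    fix e assume "e \<in> {e. e dvd m}"
    then have "e dvd m" by simp
    with assms show "m div e \<in> {e. e dvd m}" "m div (m div e) = e" "m div e \<noteq> e"
      by (auto simp: div_div_eq_right dvd_div_eq_0_iff) (metis dvd_mult_div_cancel)
  qed simp
  then show ?thesis
    by simp
qed

lemma four_dvd_sum_if_symmetric:
  fixes g :: "nat \<Rightarrow> nat"
  assumes "odd n" and "\<And>u. u \<in> {1..<n} \<Longrightarrow> even (g u)"
    and "\<And>u. u \<in> {1..<n} \<Longrightarrow> g (n - u) = g u"
  shows "4 dvd (\<Sum>u\<in>{1..<n}. g u)"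
proof -
  have "even (\<Sum>u\<in>{1..<n}. g u div 2)"
  proof (rule even_sum_if_involution[where h = "\<lambda>u. n - u"])
    fix u assume "u \<in> {1..<n}"
    with assms show "n - u \<in> {1..<n}" "n - (n - u) = u" "n - u \<noteq> u" "g (n - u) div 2 = g u div 2"
      by auto presburger
  qed
  moreover have "(\<Sum>u\<in>{1..<n}. g u) = 2 * (\<Sum>u\<in>{1..<n}. g u div 2)"
    using assms(2) by (simp add: sum_distrib_left)
  ultimately show ?thesis
    by auto
qed

section \<open>Divisors avoiding a prime power\<close>

lemma inj_on_prime_power_mult:
  assumes "prime (p::nat)" and "\<forall>e\<in>E. \<not> p dvd e"
  shows "inj_on (\<lambda>(y, e). p ^ y * e) (A \<times> E)"
proof -
  let ?g = "\<lambda>x. (multiplicity p x, x div p ^ multiplicity p x)"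
  have "p \<noteq> 0"
    using assms(1) by auto
  have "?g (p ^ y * e) = (y, e)" if "\<not> p dvd e" for y e
  proof -
    from that \<open>p \<noteq> 0\<close> have "multiplicity p (p ^ y * e) = y"
      by (intro multiplicity_decomposeI) auto
    with \<open>p \<noteq> 0\<close> show ?thesis
      by simp
  qed
  with assms(2) show ?thesis
    by (intro inj_on_inverseI[where g = ?g]) auto
qed

lemma biregular_divisors_prime_power_eq_image:
  assumes p: "prime (p::nat)" and "\<not> p dvd m" and "coprime r p"
  shows "biregular_divisors (p ^ k) r (p ^ b * m) =
    (\<lambda>(y, e). p ^ y * e) ` ({..<min (Suc b) k} \<times> {e. e dvd m \<and> \<not> r dvd e})"
proof (intro equalityI subsetI)
  fix d assume "d \<in> biregular_divisors (p ^ k) r (p ^ b * m)"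
  then have d: "d dvd p ^ b * m" "\<not> p ^ k dvd d" "\<not> r dvd d"
    by (auto simp: biregular_divisors_def)
  then obtain d1 e where de: "d = d1 * e" "d1 dvd p ^ b" "e dvd m"
    using division_decomp by blast
  then obtain y where y: "y \<le> b" "d1 = p ^ y"
    using divides_primepow_nat[OF p] by blast
  have "y < k"
  proof (rule ccontr)
    assume "\<not> y < k"
    then have "p ^ k dvd d"
      using de y by (simp add: le_imp_power_dvd dvd_mult2)
    with d show False
      by simp
  qed
  moreover from d de have "\<not> r dvd e"
    by auto
  ultimately show "d \<in> (\<lambda>(y, e). p ^ y * e) ` ({..<min (Suc b) k} \<times> {e. e dvd m \<and> \<not> r dvd e})"
    using de y by auto
next
  fix d assume "d \<in> (\<lambda>(y, e). p ^ y * e) ` ({..<min (Suc b) k} \<times> {e. e dvd m \<and> \<not> r dvd e})"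
  then obtain y e where y: "y < Suc b" "y < k" and e: "e dvd m" "\<not> r dvd e" and d: "d = p ^ y * e"
    by auto
  from e \<open>\<not> p dvd m\<close> have "\<not> p dvd e"
    by (meson dvd_trans)
  have "d dvd p ^ b * m"
    using y e d by (simp add: le_imp_power_dvd mult_dvd_mono)
  moreover have "\<not> p ^ k dvd d"
  proof
    assume "p ^ k dvd d"
    then have "p ^ y * p ^ (k - y) dvd p ^ y * e"
      using d \<open>y < k\<close> by (simp flip: power_add)
    then have "p ^ (k - y) dvd e"
      using p by (simp add: prime_gt_0_nat)
    moreover have "p dvd p ^ (k - y)"
      using \<open>y < k\<close> by (simp add: dvd_power)
    ultimately show False
      using \<open>\<not> p dvd e\<close> dvd_trans by blast
  qed
  moreover have "\<not> r dvd d"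
    using \<open>coprime r p\<close> e d by (simp add: coprime_dvd_mult_right_iff)
  ultimately show "d \<in> biregular_divisors (p ^ k) r (p ^ b * m)"
    by (simp add: biregular_divisors_def)
qed

lemma card_biregular_divisors_prime_power:
  assumes "prime (p::nat)" and "\<not> p dvd m" and "coprime r p"
  shows "card (biregular_divisors (p ^ k) r (p ^ b * m)) = min (Suc b) k * card {e. e dvd m \<and> \<not> r dvd e}"
proof -
  have "inj_on (\<lambda>(y, e). p ^ y * e) ({..<min (Suc b) k} \<times> {e. e dvd m \<and> \<not> r dvd e})"
    using assms(1,2) by (intro inj_on_prime_power_mult) (auto dest: dvd_trans)
  then show ?thesis
    by (simp add: biregular_divisors_prime_power_eq_image[OF assms] card_image card_cartesian_product)
qed

section \<open>The character modulo 4\<close>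

definition chi4 :: "nat \<Rightarrow> int" where
  "chi4 k = (if k mod 4 = 1 then 1 else if k mod 4 = 3 then -1 else 0)"

lemma chi4_mult: "chi4 (a * b) = chi4 a * chi4 b"
proof -
  have "a * b mod 4 = (a mod 4) * (b mod 4) mod 4"
    by (simp add: mod_mult_eq)
  moreover have "a mod 4 \<in> {0, 1, 2, 3}" "b mod 4 \<in> {0, 1, 2, 3}"
    by auto
  ultimately show ?thesis
    unfolding chi4_def by auto
qed

lemma chi4_power_3: "chi4 (3 ^ k) = (-1) ^ k"
  by (induction k) (simp_all add: chi4_mult chi4_def[of 3] chi4_def[of "Suc 0"])

lemma chi4_odd: "odd k \<Longrightarrow> chi4 k = 1 \<or> chi4 k = -1"
  unfolding chi4_def by presburger

lemma four_dvd_two_minus_chi4: "odd k \<Longrightarrow> 4 dvd 2 - int k - chi4 k"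
  unfolding chi4_def by presburger

lemma square_mod_4_neq_3: "(s::nat) * s mod 4 \<noteq> 3"
proof -
  have "s * s mod 4 = (s mod 4) * (s mod 4) mod 4"
    by (simp add: mod_mult_eq)
  moreover have "s mod 4 \<in> {0, 1, 2, 3}"
    by auto
  ultimately show ?thesis
    by auto
qed

lemma square_mod_3_neq_2: "(s::nat) * s mod 3 \<noteq> 2"
proof -
  have "s * s mod 3 = (s mod 3) * (s mod 3) mod 3"
    by (simp add: mod_mult_eq)
  moreover have "s mod 3 \<in> {0, 1, 2}"
    by auto
  ultimately show ?thesis
    by auto
qed

lemma sum_divisors_chi4_eq_0:
  assumes "m mod 4 = 3"
  shows "(\<Sum>e | e dvd m. chi4 (m div e)) = 0"
proof (rule sum_involution_eq_0[where h = "\<lambda>e. m div e"])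
  fix e assume "e \<in> {e. e dvd m}"
  then have e: "e dvd m" "e * (m div e) = m"
    by simp_all
  with assms have "m div e \<noteq> 0"
    by (metis mult_0_right zero_neq_numeral mod_0)
  then show "m div (m div e) = e"
    by (metis e(2) nonzero_mult_div_cancel_right)
  show "m div e \<in> {e. e dvd m}"
    using e(2) by (metis dvd_triv_right mem_Collect_eq)
  show "m div e \<noteq> e"
    using e(2) assms square_mod_4_neq_3 by metis
  have "chi4 e * chi4 (m div e) = chi4 m"
    by (simp add: e(2) flip: chi4_mult)
  also have "\<dots> = -1"
    using assms by (simp add: chi4_def)
  moreover from assms have "odd m"
    by presburger
  then have "odd e" "odd (m div e)"
    using e(2) by (metis even_mult_iff)+
  ultimately show "chi4 (m div (m div e)) + chi4 (m div e) = 0"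
    using \<open>m div (m div e) = e\<close> chi4_odd by fastforce
qed

lemma sum_alternating_sign_eq_0:
  "2 * j \<le> Suc b \<Longrightarrow> (\<Sum>y<2 * j. (-1::int) ^ (b - y)) = 0"
proof (induction j)
  case (Suc j)
  then have "b - 2 * j = Suc (b - Suc (2 * j))"
    by simp
  with Suc show ?case
    by simp
qed simp

section \<open>The moduli \<open>2 ^ \<alpha>\<close> and \<open>3 ^ \<beta>\<close>\<close>

lemma power_2_not_dvd_odd:
  assumes "odd (m::nat)" and "\<alpha> \<ge> 1"
  shows "\<not> 2 ^ \<alpha> dvd m"
proof
  assume "2 ^ \<alpha> dvd m"
  moreover have "2 dvd (2::nat) ^ \<alpha>"
    using assms(2) by (simp add: dvd_power)
  ultimately show False
    using assms(1) dvd_trans by blast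
qed

lemma biregular_divisors_2_3_odd_eq_image:
  assumes "odd m" and "\<not> 3 dvd m" and "\<alpha> \<ge> 1"
  shows "biregular_divisors (2 ^ \<alpha>) (3 ^ \<beta>) (3 ^ b * m) =
    (\<lambda>(y, e). 3 ^ y * e) ` ({..<min (Suc b) \<beta>} \<times> {e. e dvd m})"
  using biregular_divisors_prime_power_eq_image[of 3 m "2 ^ \<alpha>" \<beta> b] assms
  by (simp add: biregular_divisors_commute divisors_not_dvd_eq power_2_not_dvd_odd)

lemma card_biregular_divisors_2_3_odd:
  assumes "odd m" and "\<not> 3 dvd m" and "\<alpha> \<ge> 1"
  shows "card (biregular_divisors (2 ^ \<alpha>) (3 ^ \<beta>) (3 ^ b * m)) = min (Suc b) \<beta> * card {e. e dvd m}"
  using card_biregular_divisors_prime_power[of 3 m "2 ^ \<alpha>" \<beta> b] assms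
  by (simp add: biregular_divisors_commute divisors_not_dvd_eq power_2_not_dvd_odd)

lemma sum_chi4_biregular_divisors_2_3_odd:
  assumes "odd m" and "\<not> 3 dvd m" and "\<alpha> \<ge> 1"
  shows "(\<Sum>a\<in>biregular_divisors (2 ^ \<alpha>) (3 ^ \<beta>) (3 ^ b * m). chi4 (3 ^ b * m div a)) =
    (\<Sum>y<min (Suc b) \<beta>. (-1) ^ (b - y)) * (\<Sum>e | e dvd m. chi4 (m div e))"
proof -
  have inj: "inj_on (\<lambda>(y, e). 3 ^ y * e) ({..<min (Suc b) \<beta>} \<times> {e. e dvd m})"
    using \<open>\<not> 3 dvd m\<close> by (intro inj_on_prime_power_mult) (auto dest: dvd_trans)
  have quotient: "chi4 (3 ^ b * m div (3 ^ y * e)) = (-1) ^ (b - y) * chi4 (m div e)"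
    if "y < Suc b" "e dvd m" for y e
  proof -
    from that have "3 ^ b * m = (3 ^ y * e) * (3 ^ (b - y) * (m div e))"
      by (simp add: algebra_simps flip: power_add)
    moreover from that \<open>odd m\<close> have "e \<noteq> 0"
      by (metis dvd_0_left even_zero)
    then have "3 ^ y * e \<noteq> 0"
      by simp
    ultimately have "3 ^ b * m div (3 ^ y * e) = 3 ^ (b - y) * (m div e)"
      by (metis nonzero_mult_div_cancel_left)
    then show ?thesis
      by (simp add: chi4_mult chi4_power_3)
  qed
  have "(\<Sum>a\<in>biregular_divisors (2 ^ \<alpha>) (3 ^ \<beta>) (3 ^ b * m). chi4 (3 ^ b * m div a)) =
      (\<Sum>(y, e)\<in>{..<min (Suc b) \<beta>} \<times> {e. e dvd m}. chi4 (3 ^ b * m div (3 ^ y * e)))"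
    unfolding biregular_divisors_2_3_odd_eq_image[OF assms]
    by (subst sum.reindex[OF inj]) (simp add: case_prod_unfold)
  also have "\<dots> = (\<Sum>(y, e)\<in>{..<min (Suc b) \<beta>} \<times> {e. e dvd m}. (-1) ^ (b - y) * chi4 (m div e))"
    by (rule sum.cong) (auto simp: quotient)
  finally show ?thesis
    by (simp add: sum_product sum.cartesian_product)
qed

lemma mod_4_eq_3_factorization:
  fixes n :: nat
  assumes "n mod 4 = 3" and "even \<beta> \<or> \<not> 3 dvd n"
  obtains b m where "n = 3 ^ b * m" and "\<not> 3 dvd m" and "odd m"
    and "m mod 4 = 3 \<or> even (min (Suc b) \<beta>)"
proof -
  from assms(1) have "n \<noteq> 0" "odd n"
    by presburger+
  define b where "b = multiplicity 3 n"
  from \<open>n \<noteq> 0\<close> obtain m where n: "n = 3 ^ b * m" and "\<not> 3 dvd m"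
    using multiplicity_decompose'[of n 3] unfolding b_def by auto
  from \<open>odd n\<close> n have "odd m"
    by simp
  have "m mod 4 = 3 \<or> even (min (Suc b) \<beta>)"
  proof (cases "m mod 4 = 3")
    case False
    with \<open>odd m\<close> have "chi4 m = 1"
      unfolding chi4_def by presburger
    moreover have "chi4 n = -1"
      using \<open>n mod 4 = 3\<close> by (simp add: chi4_def)
    ultimately have "odd b"
      using n by (auto simp: chi4_mult chi4_power_3)
    then have "3 dvd n"
      using n by (simp add: odd_pos)
    with assms(2) have "even \<beta>"
      by simp
    with \<open>odd b\<close> show ?thesis
      by (simp add: min_def)
  qed simp
  with n \<open>\<not> 3 dvd m\<close> \<open>odd m\<close> show ?thesis
    using that by blast
qed

lemma even_card_biregular_divisors_mod_4_eq_3: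
  assumes "n mod 4 = 3" and "\<alpha> \<ge> 1" and "even \<beta> \<or> \<not> 3 dvd n"
  shows "even (card (biregular_divisors (2 ^ \<alpha>) (3 ^ \<beta>) n))"
proof -
  obtain b m where n: "n = 3 ^ b * m" and "\<not> 3 dvd m" "odd m"
    and cases: "m mod 4 = 3 \<or> even (min (Suc b) \<beta>)"
    using mod_4_eq_3_factorization[OF assms(1,3)] .
  have "even (card {e. e dvd m})" if "m mod 4 = 3"
    using that odd_pos[OF \<open>odd m\<close>] square_mod_4_neq_3 by (metis even_card_divisors_if_not_square)
  with cases show ?thesis
    using card_biregular_divisors_2_3_odd[OF \<open>odd m\<close> \<open>\<not> 3 dvd m\<close> assms(2)] n by auto
qed

lemma sum_chi4_biregular_divisors_mod_4_eq_3:
  assumes "n mod 4 = 3" and "\<alpha> \<ge> 1" and "even \<beta> \<or> \<not> 3 dvd n"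
  shows "(\<Sum>a\<in>biregular_divisors (2 ^ \<alpha>) (3 ^ \<beta>) n. chi4 (n div a)) = 0"
proof -
  obtain b m where n: "n = 3 ^ b * m" and "\<not> 3 dvd m" "odd m"
    and cases: "m mod 4 = 3 \<or> even (min (Suc b) \<beta>)"
    using mod_4_eq_3_factorization[OF assms(1,3)] .
  have "(\<Sum>y<min (Suc b) \<beta>. (-1::int) ^ (b - y)) = 0" if "even (min (Suc b) \<beta>)"
    using that by (elim evenE) (simp add: sum_alternating_sign_eq_0)
  with cases show ?thesis
    using sum_chi4_biregular_divisors_2_3_odd[OF \<open>odd m\<close> \<open>\<not> 3 dvd m\<close> assms(2)] n
      sum_divisors_chi4_eq_0 by auto
qed

lemma even_card_biregular_divisors_mod_4_eq_2:
  assumes "v mod 4 = 2" and "\<alpha> \<ge> 2"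
  shows "even (card (biregular_divisors (2 ^ \<alpha>) (3 ^ \<beta>) v))"
proof -
  define w where "w = v div 2"
  from assms(1) have v: "v = 2 * w"
    unfolding w_def by presburger
  from assms(1) have "\<not> 2 dvd w"
    unfolding w_def by presburger
  then have "card (biregular_divisors (2 ^ \<alpha>) (3 ^ \<beta>) (2 ^ 1 * w)) =
      min (Suc 1) \<alpha> * card {e. e dvd w \<and> \<not> 3 ^ \<beta> dvd e}"
    by (intro card_biregular_divisors_prime_power) simp_all
  with v assms(2) show ?thesis
    by (simp add: min_def)
qed

lemma even_card_biregular_divisors_mod_3_eq_2:
  assumes "even v" and "v mod 3 = 2" and "even \<alpha>" and "\<beta> \<ge> 1"
  shows "even (card (biregular_divisors (2 ^ \<alpha>) (3 ^ \<beta>) v))"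
proof -
  from assms(2) have "v \<noteq> 0"
    by auto
  define b where "b = multiplicity 2 v"
  from \<open>v \<noteq> 0\<close> obtain m where v: "v = 2 ^ b * m" and "\<not> 2 dvd m"
    using multiplicity_decompose'[of v 2] unfolding b_def by auto
  then have "m > 0"
    by (auto intro!: gr0I)
  have "\<not> 3 dvd m"
  proof
    assume "3 dvd m"
    with v have "3 dvd v"
      by simp
    with assms(2) show False
      by presburger
  qed
  moreover have "3 dvd (3::nat) ^ \<beta>"
    using \<open>\<beta> \<ge> 1\<close> by (simp add: dvd_power)
  ultimately have divisors_m: "{e. e dvd m \<and> \<not> 3 ^ \<beta> dvd e} = {e. e dvd m}"
    by (meson divisors_not_dvd_eq dvd_trans)
  have "card (biregular_divisors (2 ^ \<alpha>) (3 ^ \<beta>) (2 ^ b * m)) =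
      min (Suc b) \<alpha> * card {e. e dvd m \<and> \<not> 3 ^ \<beta> dvd e}"
    using \<open>\<not> 2 dvd m\<close> by (intro card_biregular_divisors_prime_power) simp_all
  then have card: "card (biregular_divisors (2 ^ \<alpha>) (3 ^ \<beta>) v) = min (Suc b) \<alpha> * card {e. e dvd m}"
    unfolding divisors_m v .
  show ?thesis
  proof (cases "even b")
    case True
    then obtain j where "b = 2 * j"
      by (rule evenE)
    then have "2 ^ b mod 3 = (1::nat)"
      by (simp add: power_mult power_mod[symmetric])
    then have "m mod 3 = (2 ^ b mod 3) * m mod 3"
      by simp
    also have "\<dots> = 2"
      using v assms(2) by (simp add: mod_mult_left_eq)
    finally have "m mod 3 = 2" .
    with \<open>m > 0\<close> have "even (card {e. e dvd m})"
      by (metis even_card_divisors_if_not_square square_mod_3_neq_2)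
    with card show ?thesis
      by simp
  next
    case False
    with assms(3) card show ?thesis
      by (simp add: min_def)
  qed
qed

lemma even_card_mult_card_biregular_divisors:
  assumes "n mod 4 = 3" and "even \<beta> \<or> (even \<alpha> \<and> n mod 3 = 2)" and "\<alpha> \<ge> 2" and "\<beta> \<ge> 1"
    and "x + y = n" and "even x"
  shows "even (card (biregular_divisors (2 ^ \<alpha>) (3 ^ \<beta>) x) * card (biregular_divisors (2 ^ \<alpha>) (3 ^ \<beta>) y))"
proof (cases "even (card (biregular_divisors (2 ^ \<alpha>) (3 ^ \<beta>) x))")
  case False
  then have "x mod 4 \<noteq> 2"
    using even_card_biregular_divisors_mod_4_eq_2 \<open>\<alpha> \<ge> 2\<close> by blast
  with assms(1,5,6) have "y mod 4 = 3"
    by presburger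
  moreover have "even \<beta> \<or> \<not> 3 dvd y"
  proof (cases "even \<beta>")
    case False
    with assms(2) have "even \<alpha>" "n mod 3 = 2"
      by auto
    then have "x mod 3 \<noteq> 2"
      using even_card_biregular_divisors_mod_3_eq_2 \<open>even x\<close> \<open>\<beta> \<ge> 1\<close> \<open>odd (card _)\<close> by blast
    with \<open>n mod 3 = 2\<close> assms(5) show ?thesis
      by presburger
  qed simp
  ultimately have "even (card (biregular_divisors (2 ^ \<alpha>) (3 ^ \<beta>) y))"
    using even_card_biregular_divisors_mod_4_eq_3 \<open>\<alpha> \<ge> 2\<close> by simp
  then show ?thesis
    by simp
qed simp

lemma four_dvd_convolution_card_biregular_divisors:
  assumes "n mod 4 = 3" and "even \<beta> \<or> (even \<alpha> \<and> n mod 3 = 2)" and "\<alpha> \<ge> 2" and "\<beta> \<ge> 1"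
  shows "4 dvd (\<Sum>u\<in>{1..<n}. card (biregular_divisors (2 ^ \<alpha>) (3 ^ \<beta>) u)
                    * card (biregular_divisors (2 ^ \<alpha>) (3 ^ \<beta>) (n - u)))"
proof -
  let ?d = "\<lambda>u. card (biregular_divisors (2 ^ \<alpha>) (3 ^ \<beta>) u)"
  from assms(1) have "odd n"
    by presburger
  have "even (?d u * ?d (n - u))" if u: "u \<in> {1..<n}" for u
  proof (cases "even u")
    case True
    with u show ?thesis
      using even_card_mult_card_biregular_divisors[OF assms, of u "n - u"] by simp
  next
    case False
    with u \<open>odd n\<close> have "even (n - u)"
      by simp
    with u show ?thesis
      using even_card_mult_card_biregular_divisors[OF assms, of "n - u" u] by (simp add: mult.commute)
  qed
  with \<open>odd n\<close> show ?thesis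
    by (intro four_dvd_sum_if_symmetric) (auto simp: mult.commute)
qed

lemma four_dvd_sum_two_minus_quotients:
  assumes "n mod 4 = 3" and "\<alpha> \<ge> 1" and "even \<beta> \<or> \<not> 3 dvd n"
  shows "4 dvd (\<Sum>a\<in>biregular_divisors (2 ^ \<alpha>) (3 ^ \<beta>) n. 2 - int (n div a))"
proof -
  let ?D = "biregular_divisors (2 ^ \<alpha>) (3 ^ \<beta>) n"
  have "odd (n div a)" if "a \<in> ?D" for a
  proof -
    from that have "n = a * (n div a)"
      by (simp add: biregular_divisors_def)
    moreover from assms(1) have "odd n"
      by presburger
    ultimately show ?thesis
      by (metis even_mult_iff)
  qed
  then have "4 dvd (\<Sum>a\<in>?D. 2 - int (n div a) - chi4 (n div a))"
    by (intro dvd_sum four_dvd_two_minus_chi4)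
  also have "(\<Sum>a\<in>?D. 2 - int (n div a) - chi4 (n div a)) = (\<Sum>a\<in>?D. 2 - int (n div a))"
    using sum_chi4_biregular_divisors_mod_4_eq_3[OF assms] by (simp add: sum_subtractf)
  finally show ?thesis .
qed

theorem eight_dvd_Bbar_2_3:
  assumes "\<alpha> \<ge> 2" and "\<beta> \<ge> 1" and "n mod 4 = 3" and "even \<beta> \<or> (even \<alpha> \<and> n mod 3 = 2)"
  shows "8 dvd Bbar (2 ^ \<alpha>) (3 ^ \<beta>) n"
proof (rule eight_dvd_Bbar_if)
  show "n > 0"
    using assms(3) by presburger
  show "4 dvd (\<Sum>u\<in>{1..<n}. card (biregular_divisors (2 ^ \<alpha>) (3 ^ \<beta>) u)
                  * card (biregular_divisors (2 ^ \<alpha>) (3 ^ \<beta>) (n - u)))"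
    using four_dvd_convolution_card_biregular_divisors assms by blast
  have "even \<beta> \<or> \<not> 3 dvd n"
    using assms(4) by presburger
  then show "4 dvd (\<Sum>a\<in>biregular_divisors (2 ^ \<alpha>) (3 ^ \<beta>) n. 2 - int (n div a))"
    using four_dvd_sum_two_minus_quotients assms(1,3) by simp
qed

theorem theorem4:
  fixes \<alpha> \<beta> n :: nat
  assumes "\<alpha> \<ge> 2" and "\<beta> \<ge> 1"
  shows "(((odd \<alpha> \<and> even \<beta>) \<or> (even \<alpha> \<and> even \<beta>)) \<longrightarrow>
           (8 dvd Bbar (2 ^ \<alpha>) (3 ^ \<beta>) (12 * n + 3) \<and> 8 dvd Bbar (2 ^ \<alpha>) (3 ^ \<beta>) (12 * n + 7)))
       \<and> (((odd \<alpha> \<longleftrightarrow> even \<beta>) \<or> (even \<alpha> \<and> even \<beta>)) \<longrightarrow>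
           8 dvd Bbar (2 ^ \<alpha>) (3 ^ \<beta>) (12 * n + 11))"
proof (intro conjI impI)
  assume "(odd \<alpha> \<and> even \<beta>) \<or> (even \<alpha> \<and> even \<beta>)"
  then have "even \<beta>"
    by blast
  show "8 dvd Bbar (2 ^ \<alpha>) (3 ^ \<beta>) (12 * n + 3)"
    by (rule eight_dvd_Bbar_2_3[OF assms]) (use \<open>even \<beta>\<close> in presburger)+
  show "8 dvd Bbar (2 ^ \<alpha>) (3 ^ \<beta>) (12 * n + 7)"
    by (rule eight_dvd_Bbar_2_3[OF assms]) (use \<open>even \<beta>\<close> in presburger)+
next
  assume "(odd \<alpha> \<longleftrightarrow> even \<beta>) \<or> (even \<alpha> \<and> even \<beta>)"
  then have "even \<beta> \<or> even \<alpha>"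
    by blast
  then show "8 dvd Bbar (2 ^ \<alpha>) (3 ^ \<beta>) (12 * n + 11)"
    by (intro eight_dvd_Bbar_2_3[OF assms]) presburger+
qed

end
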